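(* Let $(\mathbf{x}_i,y_i)$, $i=1,\dots,n$, be training samples with $\mathbf{x}_i\in\mathbb{R}^d$, $y_i\in\{1,\dots,L\}$, let $\mathbf{x}^*_{i'}\in\mathbb{R}^d$, $i'=1,\dots,m$, be universum samples, and let $C,C^*>0$, $\Delta\ge0$. Problem (MU) is $$\min_{\mathbf{w}_1,\dots,\mathbf{w}_L,\boldsymbol\xi,\boldsymbol\zeta}\ \tfrac12\sum_{l=1}^L\|\mathbf{w}_l\|_2^2+C\sum_{i=1}^n\xi_i+C^*\sum_{i'=1}^m\sum_{k=1}^L\zeta_{i'k}$$ subject to $(\mathbf{w}_{y_i}-\mathbf{w}_l)^\top\mathbf{x}_i\ge 1-\delta_{il}-\xi_i$ for all $i\le n$, $l\le L$, and $\big|\mathbf{w}_k^\top\mathbf{x}^*_{i'}-\max_{l}\mathbf{w}_l^\top\mathbf{x}^*_{i'}\big|\le\Delta+\zeta_{i'k}$, $\zeta_{i'k}\ge0$ for all $i'\le m$, $k\le L$. Problem (CS) is the Crammer–Singer multiclass SVM on the augmented data set of $n+mL$ samples, where samples $i=1,\dots,n$ are the training samples with $C_i=C$, $e_{il}=1-\delta_{il}$, and for $i'=1,\dots,m$, $k=1,\dots,L$, the sample with index $i=n+(i'-1)L+k$ is $(\mathbf{x}_i,y_i)=(\mathbf{x}^*_{i'},k)$ with $C_i=C^*$ and $e_{il}=-\Delta(1-\delta_{il})$: $$\min_{\mathbf{w}_1,\dots,\mathbf{w}_L,\boldsymbol\xi}\ \tfrac12\sum_{l}\|\mathbf{w}_l\|_2^2+\sum_{i=1}^{n+mL}C_i\xi_i\quad\text{s.t.}\quad(\mathbf{w}_{y_i}-\mathbf{w}_l)^\top\mathbf{x}_i\ge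 e_{il}-\xi_i\ \ \forall i,l.$$ Then (MU) and (CS) are equivalent: for every fixed $(\mathbf{w}_1,\dots,\mathbf{w}_L)$, each universum sample contributes the same amount to the objective of both problems after minimizing over the slack variables, so the two problems have the same objective as a function of $(\mathbf{w}_1,\dots,\mathbf{w}_L)$ and hence the same optimal solutions in $(\mathbf{w}_1,\dots,\mathbf{w}_L)$.
   Context: $\delta_{il}=1$ if $y_i=l$ and $0$ otherwise (with $y_i$ the label of the indexed sample). *)

theory Defs
  imports "HOL-Analysis.Analysis"
begin

definition kdelta :: "nat \<Rightarrow> nat \<Rightarrow> real" where
  "kdelta a b = (if a = b then 1 else 0)"

definition reg_term :: "nat \<Rightarrow> (nat \<Rightarrow> real^'d) \<Rightarrow> real" where
  "reg_term L w = (1/2) * (\<Sum>l=1..L. (norm (w l))^2)"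

definition mu_feasible ::
  "nat \<Rightarrow> nat \<Rightarrow> nat \<Rightarrow> (nat \<Rightarrow> real^'d) \<Rightarrow> (nat \<Rightarrow> nat) \<Rightarrow> (nat \<Rightarrow> real^'d)
   \<Rightarrow> real \<Rightarrow> (nat \<Rightarrow> real^'d) \<Rightarrow> (nat \<Rightarrow> real) \<Rightarrow> (nat \<Rightarrow> nat \<Rightarrow> real) \<Rightarrow> bool" where
  "mu_feasible n m L x y xs \<Delta> w \<xi> \<zeta> \<longleftrightarrow>
     (\<forall>i\<in>{1..n}. \<forall>l\<in>{1..L}. (w (y i) - w l) \<bullet> x i \<ge> 1 - kdelta (y i) l - \<xi> i) \<and>
     (\<forall>i'\<in>{1..m}. \<forall>k\<in>{1..L}.
        \<bar>w k \<bullet> xs i' - Max ((\<lambda>l. w l \<bullet> xs i') ` {1..L})\<bar> \<le> \<Delta> + \<zeta> i' k \<and> \<zeta> i' k \<ge> 0)"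

definition mu_obj ::
  "nat \<Rightarrow> nat \<Rightarrow> nat \<Rightarrow> real \<Rightarrow> real \<Rightarrow> (nat \<Rightarrow> real^'d) \<Rightarrow> (nat \<Rightarrow> real)
   \<Rightarrow> (nat \<Rightarrow> nat \<Rightarrow> real) \<Rightarrow> real" where
  "mu_obj n m L C Cs w \<xi> \<zeta> =
     reg_term L w + C * (\<Sum>i=1..n. \<xi> i) + Cs * (\<Sum>i'=1..m. \<Sum>k=1..L. \<zeta> i' k)"

definition mu_val where
  "mu_val n m L x y xs C Cs \<Delta> w =
     Inf {mu_obj n m L C Cs w \<xi> \<zeta> | \<xi> \<zeta>. mu_feasible n m L x y xs \<Delta> w \<xi> \<zeta>}"

definition mu_opt where
  "mu_opt n m L x y xs C Cs \<Delta> w \<longleftrightarrow>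
     (\<exists>\<xi> \<zeta>. mu_feasible n m L x y xs \<Delta> w \<xi> \<zeta> \<and>
       (\<forall>w' \<xi>' \<zeta>'. mu_feasible n m L x y xs \<Delta> w' \<xi>' \<zeta>' \<longrightarrow>
          mu_obj n m L C Cs w \<xi> \<zeta> \<le> mu_obj n m L C Cs w' \<xi>' \<zeta>'))"

definition cs_feasible ::
  "nat \<Rightarrow> nat \<Rightarrow> (nat \<Rightarrow> real^'d) \<Rightarrow> (nat \<Rightarrow> nat) \<Rightarrow> (nat \<Rightarrow> nat \<Rightarrow> real)
   \<Rightarrow> (nat \<Rightarrow> real^'d) \<Rightarrow> (nat \<Rightarrow> real) \<Rightarrow> bool" where
  "cs_feasible N L X Y e w \<xi> \<longleftrightarrow>
     (\<forall>i\<in>{1..N}. \<forall>l\<in>{1..L}. (w (Y i) - w l) \<bullet> X i \<ge> e i l - \<xi> i)"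

definition cs_obj ::
  "nat \<Rightarrow> nat \<Rightarrow> (nat \<Rightarrow> real) \<Rightarrow> (nat \<Rightarrow> real^'d) \<Rightarrow> (nat \<Rightarrow> real) \<Rightarrow> real" where
  "cs_obj N L Cv w \<xi> = reg_term L w + (\<Sum>i=1..N. Cv i * \<xi> i)"

definition cs_val where
  "cs_val N L X Y Cv e w = Inf {cs_obj N L Cv w \<xi> | \<xi>. cs_feasible N L X Y e w \<xi>}"

definition cs_opt where
  "cs_opt N L X Y Cv e w \<longleftrightarrow>
     (\<exists>\<xi>. cs_feasible N L X Y e w \<xi> \<and>
       (\<forall>w' \<xi>'. cs_feasible N L X Y e w' \<xi>' \<longrightarrow> cs_obj N L Cv w \<xi> \<le> cs_obj N L Cv w' \<xi>'))"

text \<open>Augmented data set: index i = n + (i'-1)*L + k  (1 \<le> i' \<le> m, 1 \<le> k \<le> L)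
  carries (xs i', k), weight Cs and margins -\<Delta>(1-\<delta>).\<close>

definition aug_x :: "nat \<Rightarrow> nat \<Rightarrow> (nat \<Rightarrow> real^'d) \<Rightarrow> (nat \<Rightarrow> real^'d) \<Rightarrow> nat \<Rightarrow> real^'d" where
  "aug_x n L x xs i = (if i \<le> n then x i else xs ((i - n - 1) div L + 1))"

definition aug_y :: "nat \<Rightarrow> nat \<Rightarrow> (nat \<Rightarrow> nat) \<Rightarrow> nat \<Rightarrow> nat" where
  "aug_y n L y i = (if i \<le> n then y i else (i - n - 1) mod L + 1)"

definition aug_C :: "nat \<Rightarrow> real \<Rightarrow> real \<Rightarrow> nat \<Rightarrow> real" where
  "aug_C n C Cs i = (if i \<le> n then C else Cs)"

definition aug_e :: "nat \<Rightarrow> nat \<Rightarrow> (nat \<Rightarrow> nat) \<Rightarrow> real \<Rightarrow> nat \<Rightarrow> nat \<Rightarrow> real" where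
  "aug_e n L y \<Delta> i l =
     (if i \<le> n then 1 - kdelta (aug_y n L y i) l
      else - \<Delta> * (1 - kdelta (aug_y n L y i) l))"

end

theory Submission
  imports Defs
begin

text \<open>For fixed weights both problems decouple in the slack variables, and every constraint
  block says exactly that one slack dominates a hinge quantity: for a training sample
  \<open>max\<^sub>l (1 - \<delta> - (w\<^sub>y - w\<^sub>l)\<bullet>x)\<close>, and for a universum sample \<open>x\<^sup>*\<close> with class \<open>k\<close>
  \<open>max 0 (max\<^sub>l w\<^sub>l\<bullet>x\<^sup>* - w\<^sub>k\<bullet>x\<^sup>* - \<Delta>)\<close>. For (MU) the latter comes from the absolute value
  constraint (the gap to the maximum is never negative); for (CS) it comes from the \<open>L\<close> margin
  constraints of the augmented sample \<open>(x\<^sup>*, k)\<close>, where \<open>\<Delta> \<ge> 0\<close> turns the one with \<open>l = k\<close>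
  into mere nonnegativity of the slack. Minimising out the slacks therefore leaves the same
  objective in the weights for both problems, and with it the same minimisers.\<close>

lemma partial_min_argmin_iff:
  fixes f :: "'w \<Rightarrow> 's \<Rightarrow> 'a::order"
  assumes lower: "\<And>w s. P w s \<Longrightarrow> V w \<le> f w s"
    and attained: "\<And>w. \<exists>s. P w s \<and> f w s = V w"
  shows "(\<exists>s. P w s \<and> (\<forall>w' s'. P w' s' \<longrightarrow> f w s \<le> f w' s')) \<longleftrightarrow> (\<forall>w'. V w \<le> V w')"
proof
  assume "\<exists>s. P w s \<and> (\<forall>w' s'. P w' s' \<longrightarrow> f w s \<le> f w' s')"
  then obtain s where s: "P w s" and min: "\<forall>w' s'. P w' s' \<longrightarrow> f w s \<le> f w' s'"
    by blast
  show "\<forall>w'. V w \<le> V w'"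
  proof
    fix w'
    obtain s' where "P w' s'" "f w' s' = V w'"
      using attained by blast
    then show "V w \<le> V w'"
      using lower[OF s] min order_trans by metis
  qed
next
  assume min: "\<forall>w'. V w \<le> V w'"
  obtain s where s: "P w s" "f w s = V w"
    using attained by blast
  have "f w s \<le> f w' s'" if "P w' s'" for w' s'
    using s(2) min lower[OF that] order_trans by metis
  then show "\<exists>s. P w s \<and> (\<forall>w' s'. P w' s' \<longrightarrow> f w s \<le> f w' s')"
    using s(1) by blast
qed

definition aug_index :: "nat \<Rightarrow> nat \<Rightarrow> nat \<Rightarrow> nat \<Rightarrow> nat" where
  "aug_index n L i' k = n + (i' - 1) * L + k"

lemma aug_index_gt: "1 \<le> k \<Longrightarrow> n < aug_index n L i' k"
  unfolding aug_index_def by simp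

lemma aug_index_div_mod:
  assumes "1 \<le> i'" "k \<in> {1..L}"
  shows "(aug_index n L i' k - n - 1) div L + 1 = i'"
    and "(aug_index n L i' k - n - 1) mod L + 1 = k"
proof -
  obtain a b where ab: "i' = Suc a" "k = Suc b"
    using assms by (cases i'; cases k) auto
  then have eq: "aug_index n L i' k - n - 1 = b + L * a"
    by (simp add: aug_index_def mult.commute)
  have "b < L"
    using assms ab by auto
  then show "(aug_index n L i' k - n - 1) div L + 1 = i'"
    and "(aug_index n L i' k - n - 1) mod L + 1 = k"
    unfolding eq using ab by simp_all
qed

lemma aug_data_at_aug_index:
  assumes "1 \<le> i'" "k \<in> {1..L}"
  shows "aug_x n L x xs (aug_index n L i' k) = xs i'"
    and "aug_y n L y (aug_index n L i' k) = k"
    and "aug_C n C Cs (aug_index n L i' k) = Cs"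
    and "aug_e n L y \<Delta> (aug_index n L i' k) l = - \<Delta> * (1 - kdelta k l)"
  using aug_index_gt[of k n L i'] aug_index_div_mod[OF assms, of n] assms
  by (auto simp: aug_x_def aug_y_def aug_C_def aug_e_def)

lemma aug_index_bij:
  "bij_betw (\<lambda>(i', k). aug_index n L i' k) ({1..m} \<times> {1..L}) {n<..n + m * L}"
proof (rule bij_betw_byWitness[where f' = "\<lambda>i. ((i - n - 1) div L + 1, (i - n - 1) mod L + 1)"])
  show "\<forall>p\<in>{1..m} \<times> {1..L}. (\<lambda>i. ((i - n - 1) div L + 1, (i - n - 1) mod L + 1))
      ((\<lambda>(i', k). aug_index n L i' k) p) = p"
    using aug_index_div_mod by auto
  show "\<forall>i\<in>{n<..n + m * L}. (\<lambda>(i', k). aug_index n L i' k)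
      ((\<lambda>i. ((i - n - 1) div L + 1, (i - n - 1) mod L + 1)) i) = i"
    by (auto simp: aug_index_def)
  show "(\<lambda>(i', k). aug_index n L i' k) ` ({1..m} \<times> {1..L}) \<subseteq> {n<..n + m * L}"
  proof clarify
    fix i' k assume "i' \<in> {1..m}" "k \<in> {1..L}"
    then have "(i' - 1) * L + k \<le> (i' - 1) * L + L" and "(i' - 1) * L + L = i' * L"
      by (auto simp: mult_eq_if)
    moreover have "i' * L \<le> m * L"
      using \<open>i' \<in> {1..m}\<close> by simp
    ultimately have "(i' - 1) * L + k \<le> m * L"
      by linarith
    then show "aug_index n L i' k \<in> {n<..n + m * L}"
      using \<open>k \<in> {1..L}\<close> by (auto simp: aug_index_def)
  qed
  show "(\<lambda>i. ((i - n - 1) div L + 1, (i - n - 1) mod L + 1)) ` {n<..n + m * L} \<subseteq> {1..m} \<times> {1..L}"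
  proof (rule image_subsetI)
    fix i assume i: "i \<in> {n<..n + m * L}"
    then have lt: "i - n - 1 < m * L"
      by auto
    then have "0 < L"
      by (metis gr0I mult_0_right not_less_zero)
    then show "((i - n - 1) div L + 1, (i - n - 1) mod L + 1) \<in> {1..m} \<times> {1..L}"
      using lt by (auto simp: div_less_iff_less_mult Suc_leI)
  qed
qed

lemma sum_aug_split:
  "(\<Sum>i=1..n + m * L. g i) = (\<Sum>i=1..n. g i) + (\<Sum>i'=1..m. \<Sum>k=1..L. g (aug_index n L i' k))"
proof -
  have "{1..n + m * L} = {1..n} \<union> {n<..n + m * L}"
    by auto
  then have "(\<Sum>i=1..n + m * L. g i) = (\<Sum>i=1..n. g i) + (\<Sum>i\<in>{n<..n + m * L}. g i)"
    by (simp add: sum.union_disjoint ivl_disj_int)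
  also have "(\<Sum>i\<in>{n<..n + m * L}. g i) = (\<Sum>(i', k)\<in>{1..m} \<times> {1..L}. g (aug_index n L i' k))"
    using sum.reindex_bij_betw[OF aug_index_bij, of g] by (simp add: case_prod_unfold)
  also have "\<dots> = (\<Sum>i'=1..m. \<Sum>k=1..L. g (aug_index n L i' k))"
    by (rule sum.cartesian_product[symmetric])
  finally show ?thesis .
qed

lemma ball_aug_split:
  "(\<forall>i\<in>{1..n + m * L}. P i) \<longleftrightarrow>
     (\<forall>i\<in>{1..n}. P i) \<and> (\<forall>i'\<in>{1..m}. \<forall>k\<in>{1..L}. P (aug_index n L i' k))"
proof -
  have "{1..n + m * L} = {1..n} \<union> (\<lambda>(i', k). aug_index n L i' k) ` ({1..m} \<times> {1..L})"
    using bij_betw_imp_surj_on[OF aug_index_bij] by auto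
  then show ?thesis
    by auto
qed

lemma abs_gap_to_Max_le_iff:
  fixes v :: "'l \<Rightarrow> real"
  assumes "finite A" "k \<in> A"
  shows "(\<bar>v k - Max (v ` A)\<bar> \<le> \<Delta> + \<zeta> \<and> 0 \<le> \<zeta>) \<longleftrightarrow> max 0 (Max (v ` A) - v k - \<Delta>) \<le> \<zeta>"
proof -
  have "v k \<le> Max (v ` A)"
    using assms by simp
  then show ?thesis
    by auto
qed

lemma margins_to_Max_le_iff:
  fixes v :: "nat \<Rightarrow> real"
  assumes "finite A" "k \<in> A" "0 \<le> \<Delta>"
  shows "(\<forall>l\<in>A. - \<Delta> * (1 - kdelta k l) - \<zeta> \<le> v k - v l) \<longleftrightarrow> max 0 (Max (v ` A) - v k - \<Delta>) \<le> \<zeta>"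
proof
  assume margins: "\<forall>l\<in>A. - \<Delta> * (1 - kdelta k l) - \<zeta> \<le> v k - v l"
  then have "0 \<le> \<zeta>"
    using assms(2) by (force simp: kdelta_def)
  moreover have "v l - v k - \<Delta> \<le> \<zeta>" if "l \<in> A" for l
    using margins that \<open>0 \<le> \<zeta>\<close> assms(3) by (cases "l = k") (force simp: kdelta_def)+
  moreover have "Max (v ` A) \<le> v k + \<Delta> + \<zeta>"
    using assms calculation(2) by (subst Max_le_iff) (auto simp: algebra_simps)
  ultimately show "max 0 (Max (v ` A) - v k - \<Delta>) \<le> \<zeta>"
    by simp
next
  assume hinge: "max 0 (Max (v ` A) - v k - \<Delta>) \<le> \<zeta>"
  have "v l \<le> Max (v ` A)" if "l \<in> A" for l
    using assms that by simp
  then show "\<forall>l\<in>A. - \<Delta> * (1 - kdelta k l) - \<zeta> \<le> v k - v l"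
    using hinge by (force simp: kdelta_def)
qed

definition train_hinge :: "nat \<Rightarrow> (nat \<Rightarrow> real^'d) \<Rightarrow> (nat \<Rightarrow> nat) \<Rightarrow> (nat \<Rightarrow> real^'d) \<Rightarrow> nat \<Rightarrow> real"
  where "train_hinge L x y w i = Max ((\<lambda>l. 1 - kdelta (y i) l - (w (y i) - w l) \<bullet> x i) ` {1..L})"

definition univ_hinge ::
  "nat \<Rightarrow> (nat \<Rightarrow> real^'d) \<Rightarrow> real \<Rightarrow> (nat \<Rightarrow> real^'d) \<Rightarrow> nat \<Rightarrow> nat \<Rightarrow> real"
  where "univ_hinge L xs \<Delta> w i' k = max 0 (Max ((\<lambda>l. w l \<bullet> xs i') ` {1..L}) - w k \<bullet> xs i' - \<Delta>)"

lemma train_margins_iff_hinge_le: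
  assumes "1 \<le> L"
  shows "(\<forall>l\<in>{1..L}. 1 - kdelta (y i) l - \<xi> \<le> (w (y i) - w l) \<bullet> x i) \<longleftrightarrow> train_hinge L x y w i \<le> \<xi>"
  using assms by (auto simp: train_hinge_def)

lemma mu_feasible_iff_hinge_le:
  assumes "1 \<le> L"
  shows "mu_feasible n m L x y xs \<Delta> w \<xi> \<zeta> \<longleftrightarrow>
    (\<forall>i\<in>{1..n}. train_hinge L x y w i \<le> \<xi> i) \<and>
    (\<forall>i'\<in>{1..m}. \<forall>k\<in>{1..L}. univ_hinge L xs \<Delta> w i' k \<le> \<zeta> i' k)"
proof -
  have "(\<bar>w k \<bullet> xs i' - Max ((\<lambda>l. w l \<bullet> xs i') ` {1..L})\<bar> \<le> \<Delta> + \<zeta> i' k \<and> 0 \<le> \<zeta> i' k)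
      \<longleftrightarrow> univ_hinge L xs \<Delta> w i' k \<le> \<zeta> i' k" if "k \<in> {1..L}" for i' k
    unfolding univ_hinge_def using abs_gap_to_Max_le_iff[of "{1..L}" k "\<lambda>l. w l \<bullet> xs i'"] that
    by simp
  then show ?thesis
    unfolding mu_feasible_def train_margins_iff_hinge_le[OF assms, symmetric] by blast
qed

lemma cs_feasible_aug_iff_hinge_le:
  assumes "1 \<le> L" "0 \<le> \<Delta>"
  shows "cs_feasible (n + m * L) L (aug_x n L x xs) (aug_y n L y) (aug_e n L y \<Delta>) w \<xi> \<longleftrightarrow>
    (\<forall>i\<in>{1..n}. train_hinge L x y w i \<le> \<xi> i) \<and>
    (\<forall>i'\<in>{1..m}. \<forall>k\<in>{1..L}. univ_hinge L xs \<Delta> w i' k \<le> \<xi> (aug_index n L i' k))"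
proof -
  have "(\<forall>l\<in>{1..L}. aug_e n L y \<Delta> i l - \<xi> i \<le> (w (aug_y n L y i) - w l) \<bullet> aug_x n L x xs i)
      \<longleftrightarrow> (\<forall>l\<in>{1..L}. 1 - kdelta (y i) l - \<xi> i \<le> (w (y i) - w l) \<bullet> x i)" if "i \<in> {1..n}" for i
    using that by (simp add: aug_x_def aug_y_def aug_e_def)
  moreover have "(\<forall>l\<in>{1..L}. aug_e n L y \<Delta> (aug_index n L i' k) l - \<xi> (aug_index n L i' k)
        \<le> (w (aug_y n L y (aug_index n L i' k)) - w l) \<bullet> aug_x n L x xs (aug_index n L i' k))
      \<longleftrightarrow> univ_hinge L xs \<Delta> w i' k \<le> \<xi> (aug_index n L i' k)"
    if "i' \<in> {1..m}" "k \<in> {1..L}" for i' k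
    unfolding univ_hinge_def
    using margins_to_Max_le_iff[of "{1..L}" k \<Delta> "\<xi> (aug_index n L i' k)" "\<lambda>l. w l \<bullet> xs i'"]
      that assms(2)
    by (simp add: aug_data_at_aug_index inner_diff_left)
  ultimately show ?thesis
    unfolding cs_feasible_def ball_aug_split train_margins_iff_hinge_le[OF assms(1), symmetric]
    by blast
qed

definition reduced_obj ::
  "nat \<Rightarrow> nat \<Rightarrow> nat \<Rightarrow> (nat \<Rightarrow> real^'d) \<Rightarrow> (nat \<Rightarrow> nat) \<Rightarrow> (nat \<Rightarrow> real^'d)
   \<Rightarrow> real \<Rightarrow> real \<Rightarrow> real \<Rightarrow> (nat \<Rightarrow> real^'d) \<Rightarrow> real" where
  "reduced_obj n m L x y xs C Cs \<Delta> w =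
     mu_obj n m L C Cs w (train_hinge L x y w) (univ_hinge L xs \<Delta> w)"

lemma mu_obj_mono:
  assumes "0 \<le> C" "0 \<le> Cs"
    and "\<forall>i\<in>{1..n}. \<xi> i \<le> \<xi>' i" and "\<forall>i'\<in>{1..m}. \<forall>k\<in>{1..L}. \<zeta> i' k \<le> \<zeta>' i' k"
  shows "mu_obj n m L C Cs w \<xi> \<zeta> \<le> mu_obj n m L C Cs w \<xi>' \<zeta>'"
proof -
  have "(\<Sum>i=1..n. \<xi> i) \<le> (\<Sum>i=1..n. \<xi>' i)"
    using assms(3) by (intro sum_mono) auto
  moreover have "(\<Sum>i'=1..m. \<Sum>k=1..L. \<zeta> i' k) \<le> (\<Sum>i'=1..m. \<Sum>k=1..L. \<zeta>' i' k)"
    using assms(4) by (intro sum_mono) auto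
  ultimately show ?thesis
    unfolding mu_obj_def using assms(1,2) by (intro add_mono mult_left_mono order_refl)
qed

lemma mu_obj_cong:
  assumes "\<forall>i\<in>{1..n}. \<xi> i = \<xi>' i" and "\<forall>i'\<in>{1..m}. \<forall>k\<in>{1..L}. \<zeta> i' k = \<zeta>' i' k"
  shows "mu_obj n m L C Cs w \<xi> \<zeta> = mu_obj n m L C Cs w \<xi>' \<zeta>'"
proof -
  have "(\<Sum>i=1..n. \<xi> i) = (\<Sum>i=1..n. \<xi>' i)"
    using assms(1) by (intro sum.cong) auto
  moreover have "(\<Sum>i'=1..m. \<Sum>k=1..L. \<zeta> i' k) = (\<Sum>i'=1..m. \<Sum>k=1..L. \<zeta>' i' k)"
    using assms(2) by (intro sum.cong) auto
  ultimately show ?thesis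
    unfolding mu_obj_def by simp
qed

lemma cs_obj_aug_eq_mu_obj:
  "cs_obj (n + m * L) L (aug_C n C Cs) w \<xi> = mu_obj n m L C Cs w \<xi> (\<lambda>i' k. \<xi> (aug_index n L i' k))"
proof -
  have "(\<Sum>i'=1..m. \<Sum>k=1..L. aug_C n C Cs (aug_index n L i' k) * \<xi> (aug_index n L i' k))
      = Cs * (\<Sum>i'=1..m. \<Sum>k=1..L. \<xi> (aug_index n L i' k))"
    unfolding sum_distrib_left by (intro sum.cong) (auto simp: aug_data_at_aug_index)
  moreover have "(\<Sum>i=1..n. aug_C n C Cs i * \<xi> i) = C * (\<Sum>i=1..n. \<xi> i)"
    by (simp add: aug_C_def sum_distrib_left)
  ultimately show ?thesis
    unfolding cs_obj_def mu_obj_def sum_aug_split by simp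
qed

lemma mu_obj_ge_reduced_obj:
  assumes "1 \<le> L" "0 \<le> C" "0 \<le> Cs" and "mu_feasible n m L x y xs \<Delta> w \<xi> \<zeta>"
  shows "reduced_obj n m L x y xs C Cs \<Delta> w \<le> mu_obj n m L C Cs w \<xi> \<zeta>"
  using assms unfolding reduced_obj_def mu_feasible_iff_hinge_le[OF assms(1)]
  by (intro mu_obj_mono) auto

lemma mu_feasible_hinges:
  "1 \<le> L \<Longrightarrow> mu_feasible n m L x y xs \<Delta> w (train_hinge L x y w) (univ_hinge L xs \<Delta> w)"
  by (simp add: mu_feasible_iff_hinge_le)

lemma cs_obj_aug_ge_reduced_obj:
  assumes "1 \<le> L" "0 \<le> \<Delta>" "0 \<le> C" "0 \<le> Cs"
    and "cs_feasible (n + m * L) L (aug_x n L x xs) (aug_y n L y) (aug_e n L y \<Delta>) w \<xi>"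
  shows "reduced_obj n m L x y xs C Cs \<Delta> w \<le> cs_obj (n + m * L) L (aug_C n C Cs) w \<xi>"
  using assms
  unfolding reduced_obj_def cs_obj_aug_eq_mu_obj cs_feasible_aug_iff_hinge_le[OF assms(1,2)]
  by (intro mu_obj_mono) auto

definition aug_hinge ::
  "nat \<Rightarrow> nat \<Rightarrow> (nat \<Rightarrow> real^'d) \<Rightarrow> (nat \<Rightarrow> nat) \<Rightarrow> (nat \<Rightarrow> real^'d) \<Rightarrow> real
   \<Rightarrow> (nat \<Rightarrow> real^'d) \<Rightarrow> nat \<Rightarrow> real" where
  "aug_hinge n L x y xs \<Delta> w i =
     (if i \<le> n then train_hinge L x y w i
      else univ_hinge L xs \<Delta> w ((i - n - 1) div L + 1) ((i - n - 1) mod L + 1))"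

lemma aug_hinge_train: "i \<le> n \<Longrightarrow> aug_hinge n L x y xs \<Delta> w i = train_hinge L x y w i"
  by (simp add: aug_hinge_def)

lemma aug_hinge_at_aug_index:
  "1 \<le> i' \<Longrightarrow> k \<in> {1..L} \<Longrightarrow> aug_hinge n L x y xs \<Delta> w (aug_index n L i' k) = univ_hinge L xs \<Delta> w i' k"
  using aug_index_gt[of k n L i'] aug_index_div_mod[of i' k L n] unfolding aug_hinge_def by auto

lemma cs_feasible_aug_hinge:
  assumes "1 \<le> L" "0 \<le> \<Delta>"
  shows "cs_feasible (n + m * L) L (aug_x n L x xs) (aug_y n L y) (aug_e n L y \<Delta>) w
    (aug_hinge n L x y xs \<Delta> w)"
  unfolding cs_feasible_aug_iff_hinge_le[OF assms]
  by (auto simp: aug_hinge_at_aug_index aug_hinge_train)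

lemma cs_obj_aug_hinge:
  "cs_obj (n + m * L) L (aug_C n C Cs) w (aug_hinge n L x y xs \<Delta> w) =
    reduced_obj n m L x y xs C Cs \<Delta> w"
  unfolding cs_obj_aug_eq_mu_obj reduced_obj_def
  by (rule mu_obj_cong) (auto simp: aug_hinge_at_aug_index aug_hinge_train)

lemma mu_val_eq_reduced_obj:
  assumes "1 \<le> L" "0 \<le> C" "0 \<le> Cs"
  shows "mu_val n m L x y xs C Cs \<Delta> w = reduced_obj n m L x y xs C Cs \<Delta> w"
  unfolding mu_val_def
proof (rule cInf_eq_minimum)
  show "reduced_obj n m L x y xs C Cs \<Delta> w \<in>
      {mu_obj n m L C Cs w \<xi> \<zeta> | \<xi> \<zeta>. mu_feasible n m L x y xs \<Delta> w \<xi> \<zeta>}"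
    using mu_feasible_hinges[OF assms(1)] unfolding reduced_obj_def by blast
qed (use mu_obj_ge_reduced_obj[OF assms] in blast)

lemma cs_val_aug_eq_reduced_obj:
  assumes "1 \<le> L" "0 \<le> \<Delta>" "0 \<le> C" "0 \<le> Cs"
  shows "cs_val (n + m * L) L (aug_x n L x xs) (aug_y n L y) (aug_C n C Cs) (aug_e n L y \<Delta>) w
    = reduced_obj n m L x y xs C Cs \<Delta> w"
  unfolding cs_val_def
proof (rule cInf_eq_minimum)
  show "reduced_obj n m L x y xs C Cs \<Delta> w \<in> {cs_obj (n + m * L) L (aug_C n C Cs) w \<xi> | \<xi>.
      cs_feasible (n + m * L) L (aug_x n L x xs) (aug_y n L y) (aug_e n L y \<Delta>) w \<xi>}"
    using cs_feasible_aug_hinge[OF assms(1,2)] cs_obj_aug_hinge by (metis (mono_tags) mem_Collect_eq)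
qed (use cs_obj_aug_ge_reduced_obj[OF assms] in blast)

lemma mu_opt_iff_reduced_obj_min:
  assumes "1 \<le> L" "0 \<le> C" "0 \<le> Cs"
  shows "mu_opt n m L x y xs C Cs \<Delta> w \<longleftrightarrow>
    (\<forall>w'. reduced_obj n m L x y xs C Cs \<Delta> w \<le> reduced_obj n m L x y xs C Cs \<Delta> w')"
proof -
  have "(\<exists>s. mu_feasible n m L x y xs \<Delta> w (fst s) (snd s) \<and>
          (\<forall>w' s'. mu_feasible n m L x y xs \<Delta> w' (fst s') (snd s') \<longrightarrow>
             mu_obj n m L C Cs w (fst s) (snd s) \<le> mu_obj n m L C Cs w' (fst s') (snd s')))
      \<longleftrightarrow> (\<forall>w'. reduced_obj n m L x y xs C Cs \<Delta> w \<le> reduced_obj n m L x y xs C Cs \<Delta> w')"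
  proof (rule partial_min_argmin_iff)
    show "\<exists>s. mu_feasible n m L x y xs \<Delta> w (fst s) (snd s) \<and>
        mu_obj n m L C Cs w (fst s) (snd s) = reduced_obj n m L x y xs C Cs \<Delta> w" for w
      using mu_feasible_hinges[OF assms(1)] unfolding reduced_obj_def by force
  qed (rule mu_obj_ge_reduced_obj[OF assms])
  then show ?thesis
    unfolding mu_opt_def split_paired_Ex split_paired_All by simp
qed

lemma cs_opt_aug_iff_reduced_obj_min:
  assumes "1 \<le> L" "0 \<le> \<Delta>" "0 \<le> C" "0 \<le> Cs"
  shows "cs_opt (n + m * L) L (aug_x n L x xs) (aug_y n L y) (aug_C n C Cs) (aug_e n L y \<Delta>) w \<longleftrightarrow>
    (\<forall>w'. reduced_obj n m L x y xs C Cs \<Delta> w \<le> reduced_obj n m L x y xs C Cs \<Delta> w')"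
  unfolding cs_opt_def
proof (rule partial_min_argmin_iff)
  show "\<exists>\<xi>. cs_feasible (n + m * L) L (aug_x n L x xs) (aug_y n L y) (aug_e n L y \<Delta>) w \<xi> \<and>
      cs_obj (n + m * L) L (aug_C n C Cs) w \<xi> = reduced_obj n m L x y xs C Cs \<Delta> w" for w
    using cs_feasible_aug_hinge[OF assms(1,2)] cs_obj_aug_hinge by blast
qed (rule cs_obj_aug_ge_reduced_obj[OF assms])

theorem proposition2:
  fixes n m L :: nat and x xs :: "nat \<Rightarrow> real^'d" and y :: "nat \<Rightarrow> nat"
    and C Cs \<Delta> :: real
  assumes "L \<ge> 1"
    and "\<forall>i\<in>{1..n}. y i \<in> {1..L}"
    and "C > 0" and "Cs > 0" and "\<Delta> \<ge> 0"
  shows "(\<forall>w. mu_val n m L x y xs C Cs \<Delta> w =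
              cs_val (n + m * L) L (aug_x n L x xs) (aug_y n L y) (aug_C n C Cs) (aug_e n L y \<Delta>) w)
       \<and> (\<forall>w. mu_opt n m L x y xs C Cs \<Delta> w \<longleftrightarrow>
              cs_opt (n + m * L) L (aug_x n L x xs) (aug_y n L y) (aug_C n C Cs) (aug_e n L y \<Delta>) w)"
proof -
  have "0 \<le> C" "0 \<le> Cs"
    using assms(3,4) by simp_all
  with assms(1,5) show ?thesis
    by (simp add: mu_val_eq_reduced_obj cs_val_aug_eq_reduced_obj
        mu_opt_iff_reduced_obj_min cs_opt_aug_iff_reduced_obj_min)
qed

end
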